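(* Let $\ell>0$ and let $M=\mathbb R\times\{x\in\mathbb R^2: (x^1)^2+(x^2)^2<\ell^2\}$ with coordinates $(t,x^1,x^2)$. Let $\lambda(x)=\log\frac{2}{1-|x|^2/\ell^2}$, $\kappa=-\lambda$, and let $\phi(t,x)$ be an arbitrary smooth function. Take the Newton-Cartan background $$\tau_\mu dx^\mu=e^{\kappa}dt,\qquad e_\mu{}^adx^\mu=e^{\lambda}dx^a,\qquad m_\mu dx^\mu=\phi\, e^{\kappa}dt,$$ and background fields $u=0$, $v=0$, and $v_\mu$ determined by $v_0=0$, $(v^1,v^2)=\tfrac32\big(x^2/\ell^2,\,-x^1/\ell^2\big)$. Then the system (S$_-$) of Theorem 1 has two linearly independent nowhere-vanishing solutions, namely $\zeta_-=\exp(\tfrac{\pi}{8}\gamma_0)\zeta_0$ for any constant Majorana spinor $\zeta_0\neq 0$.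
   Context: Conventions: $\tau^\mu,e^\mu{}_a$ are the projective inverses ($\tau^\mu\tau_\mu=1$, $\tau^\mu e_\mu{}^a=0$, $e^\mu{}_a\tau_\mu=0$, $e^\mu{}_ae_\mu{}^b=\delta^b_a$); $v_0=\tau^\mu v_\mu$, $v_a=e^\mu{}_av_\mu$, $v^a=v_a$, so $v_\mu=\tau_\mu v_0+e_\mu{}^av_a$. $\epsilon_{12}=\epsilon^{12}=1$. $\tau_{\mu\nu}=2\partial_{[\mu}\tau_{\nu]}$, $\tau_{ab}=e^\mu{}_ae^\nu{}_b\tau_{\mu\nu}$, $\tau_{0\mu}=\tau^\nu\tau_{\nu\mu}$, $\tau_\mu{}^a=\tau_{\mu\nu}e^{\nu a}$, $\tau_\mu{}^0=\tau_{0\mu}$. Spin connection $\omega_\mu{}^{ab} = 2e^{\nu[a}\partial_{[\mu}e_{\nu]}{}^{b]} - e_\mu{}^ce^{\nu a}e^{\rho b}\partial_{[\nu}e_{\rho]c} - \tau_\mu e^{\nu a}e^{\rho b}\partial_{[\nu}m_{\rho]}$. Gamma matrices: $2\times2$, $\gamma_0^2=-\mathbb1$, $\{\gamma_a,\gamma_b\}=2\delta_{ab}$, $\{\gamma_0,\gamma_a\}=0$, $\gamma^a=\gamma_a$, $\gamma^0=-\gamma_0$, $\gamma_{ab}=\epsilon_{ab}\gamma_0$, $\gamma_{a0}=\epsilon_{ab}\gamma_b$; Majorana condition $\zeta^*=\mathrm i\mathcal C_3\gamma^0\zeta$ with $\mathcal C_3^T=-\mathcal C_3$, $\gamma^T=-\mathcal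 C_3\gamma\mathcal C_3^{-1}$. $D_\mu\zeta=\partial_\mu\zeta+\tfrac14\omega_\mu{}^{ab}\gamma_{ab}\zeta$. System (S$_-$) for a commuting Majorana spinor $\zeta_-$: $(\tfrac43 v-\epsilon^{ab}\tau_{ab})\gamma_0\zeta_-=0$; $(\tfrac32\tau_\mu{}^a\gamma_{a0}+e_\mu{}^av\gamma_a+\tau_\mu v^a\gamma_a+\mathrm{Re}(u)\tau_\mu\gamma_0+\mathrm{Im}(u)\tau_\mu)\zeta_-=0$; $D_\mu\zeta_-=(\tfrac14\tau_\mu{}^0+\tfrac12v_\mu\gamma_0-\tfrac16e_\mu{}^av_b\gamma_a\gamma^b\gamma_0-\tfrac16\mathrm{Re}(u)e_\mu{}^a\gamma_a+\tfrac16\mathrm{Im}(u)e_\mu{}^a\gamma_{a0})\zeta_-$. *)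

theory Defs
  imports "HOL-Analysis.Analysis"
begin

(* Spacetime points p :: real^3 with p$0 = t, p$1 = x^1, p$2 = x^2.
   Spacetime indices mu and frame indices A range over the type 3 = {0,1,2};
   frame index 0 is the time direction, spatial frame indices a are in spat = {1,2}. *)
type_synonym pt = "real^3"
type_synonym spinor = "complex^2"
type_synonym cmat = "complex^2^2"

definition spat :: "3 set" where "spat = {1, 2}"

definition eps :: "3 \<Rightarrow> 3 \<Rightarrow> real" where
  "eps a b = (if a = 1 \<and> b = 2 then 1 else if a = 2 \<and> b = 1 then -1 else 0)"

definition pd :: "3 \<Rightarrow> (pt \<Rightarrow> 'b::real_normed_vector) \<Rightarrow> pt \<Rightarrow> 'b" where
  "pd mu f p = vector_derivative (\<lambda>s::real. f (p + s *\<^sub>R axis mu 1)) (at 0)"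

fun Ck :: "nat \<Rightarrow> pt set \<Rightarrow> (pt \<Rightarrow> real) \<Rightarrow> bool" where
  "Ck 0 U f = continuous_on U f"
| "Ck (Suc k) U f = ((\<forall>p\<in>U. f differentiable (at p)) \<and> (\<forall>mu. Ck k U (pd mu f)))"

definition smooth_on :: "pt set \<Rightarrow> (pt \<Rightarrow> real) \<Rightarrow> bool" where
  "smooth_on U f = (\<forall>k. Ck k U f)"

definition mat2 :: "complex \<Rightarrow> complex \<Rightarrow> complex \<Rightarrow> complex \<Rightarrow> cmat" where
  "mat2 a b c d = (\<chi> i j. if i = 0 then (if j = 0 then a else b) else (if j = 0 then c else d))"

definition gamma0 :: cmat where "gamma0 = mat2 0 (-1) 1 0"
definition gamma1 :: cmat where "gamma1 = mat2 0 1 1 0"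
definition gamma2 :: cmat where "gamma2 = mat2 1 0 0 (-1)"

(* lower-index gamma_A, A in {0,1,2} *)
definition gam :: "3 \<Rightarrow> cmat" where
  "gam A = (if A = 0 then gamma0 else if A = 1 then gamma1 else gamma2)"

definition gammaU0 :: cmat where "gammaU0 = - gamma0"

definition gam2 :: "3 \<Rightarrow> 3 \<Rightarrow> cmat" where
  "gam2 A B = (1/2) *\<^sub>R (gam A ** gam B - gam B ** gam A)"

definition C3 :: cmat where "C3 = mat2 0 \<i> (- \<i>) 0"

definition vconj :: "spinor \<Rightarrow> spinor" where "vconj z = (\<chi> i. cnj (z $ i))"

definition majorana :: "spinor \<Rightarrow> bool" where
  "majorana z \<longleftrightarrow> vconj z = \<i> *s ((C3 ** gammaU0) *v z)"

fun cmatpow :: "cmat \<Rightarrow> nat \<Rightarrow> cmat" where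
  "cmatpow A 0 = mat 1"
| "cmatpow A (Suc n) = A ** cmatpow A n"

definition mexp :: "cmat \<Rightarrow> cmat" where
  "mexp A = (\<Sum>n. (1 / fact n) *\<^sub>R cmatpow A n)"

(* ---------- Newton-Cartan geometry ----------
   tau p mu = tau_mu, e p mu a = e_mu^a (a in spat), m p mu = m_mu. *)
definition vielbein :: "(pt \<Rightarrow> 3 \<Rightarrow> real) \<Rightarrow> (pt \<Rightarrow> 3 \<Rightarrow> 3 \<Rightarrow> real) \<Rightarrow> pt \<Rightarrow> real^3^3" where
  "vielbein tau e p = (\<chi> A mu. if A = 0 then tau p mu else e p mu A)"

(* projective inverses: tau^mu and e^mu_a, i.e. the inverse matrix *)
definition tauU :: "(pt \<Rightarrow> 3 \<Rightarrow> real) \<Rightarrow> (pt \<Rightarrow> 3 \<Rightarrow> 3 \<Rightarrow> real) \<Rightarrow> pt \<Rightarrow> 3 \<Rightarrow> real" where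
  "tauU tau e p mu = matrix_inv (vielbein tau e p) $ mu $ 0"

definition eU :: "(pt \<Rightarrow> 3 \<Rightarrow> real) \<Rightarrow> (pt \<Rightarrow> 3 \<Rightarrow> 3 \<Rightarrow> real) \<Rightarrow> pt \<Rightarrow> 3 \<Rightarrow> 3 \<Rightarrow> real" where
  "eU tau e p mu a = matrix_inv (vielbein tau e p) $ mu $ a"

definition anti1 :: "(pt \<Rightarrow> 3 \<Rightarrow> real) \<Rightarrow> pt \<Rightarrow> 3 \<Rightarrow> 3 \<Rightarrow> real" where
  "anti1 X p mu nu = (pd mu (\<lambda>q. X q nu) p - pd nu (\<lambda>q. X q mu) p) / 2"

definition omega :: "(pt \<Rightarrow> 3 \<Rightarrow> real) \<Rightarrow> (pt \<Rightarrow> 3 \<Rightarrow> 3 \<Rightarrow> real) \<Rightarrow> (pt \<Rightarrow> 3 \<Rightarrow> real)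
    \<Rightarrow> pt \<Rightarrow> 3 \<Rightarrow> 3 \<Rightarrow> 3 \<Rightarrow> real" where
  "omega tau e m p mu a b =
     (\<Sum>nu\<in>UNIV. eU tau e p nu a * anti1 (\<lambda>q n. e q n b) p mu nu
                 - eU tau e p nu b * anti1 (\<lambda>q n. e q n a) p mu nu)
   - (\<Sum>c\<in>spat. \<Sum>nu\<in>UNIV. \<Sum>rho\<in>UNIV.
        e p mu c * eU tau e p nu a * eU tau e p rho b * anti1 (\<lambda>q n. e q n c) p nu rho)
   - tau p mu * (\<Sum>nu\<in>UNIV. \<Sum>rho\<in>UNIV. eU tau e p nu a * eU tau e p rho b * anti1 m p nu rho)"

definition tauF :: "(pt \<Rightarrow> 3 \<Rightarrow> real) \<Rightarrow> pt \<Rightarrow> 3 \<Rightarrow> 3 \<Rightarrow> real" where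
  "tauF tau p mu nu = pd mu (\<lambda>q. tau q nu) p - pd nu (\<lambda>q. tau q mu) p"

definition tauAB :: "(pt \<Rightarrow> 3 \<Rightarrow> real) \<Rightarrow> (pt \<Rightarrow> 3 \<Rightarrow> 3 \<Rightarrow> real) \<Rightarrow> pt \<Rightarrow> 3 \<Rightarrow> 3 \<Rightarrow> real" where
  "tauAB tau e p a b = (\<Sum>mu\<in>UNIV. \<Sum>nu\<in>UNIV. eU tau e p mu a * eU tau e p nu b * tauF tau p mu nu)"

definition tau0 :: "(pt \<Rightarrow> 3 \<Rightarrow> real) \<Rightarrow> (pt \<Rightarrow> 3 \<Rightarrow> 3 \<Rightarrow> real) \<Rightarrow> pt \<Rightarrow> 3 \<Rightarrow> real" where
  "tau0 tau e p mu = (\<Sum>nu\<in>UNIV. tauU tau e p nu * tauF tau p nu mu)"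

definition tauUp :: "(pt \<Rightarrow> 3 \<Rightarrow> real) \<Rightarrow> (pt \<Rightarrow> 3 \<Rightarrow> 3 \<Rightarrow> real) \<Rightarrow> pt \<Rightarrow> 3 \<Rightarrow> 3 \<Rightarrow> real" where
  "tauUp tau e p mu a = (\<Sum>nu\<in>UNIV. tauF tau p mu nu * eU tau e p nu a)"

definition vframe :: "(pt \<Rightarrow> 3 \<Rightarrow> real) \<Rightarrow> (pt \<Rightarrow> 3 \<Rightarrow> 3 \<Rightarrow> real) \<Rightarrow> (pt \<Rightarrow> 3 \<Rightarrow> real) \<Rightarrow> pt \<Rightarrow> 3 \<Rightarrow> real" where
  "vframe tau e vl p a = (\<Sum>mu\<in>UNIV. eU tau e p mu a * vl p mu)"

(* The system (S_-) on the set M for a commuting spinor field zeta;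
   v is the scalar v, vl the one-form v_mu, u the complex scalar u. *)
definition S_minus :: "pt set \<Rightarrow> (pt \<Rightarrow> 3 \<Rightarrow> real) \<Rightarrow> (pt \<Rightarrow> 3 \<Rightarrow> 3 \<Rightarrow> real) \<Rightarrow> (pt \<Rightarrow> 3 \<Rightarrow> real)
    \<Rightarrow> (pt \<Rightarrow> real) \<Rightarrow> (pt \<Rightarrow> 3 \<Rightarrow> real) \<Rightarrow> (pt \<Rightarrow> complex) \<Rightarrow> (pt \<Rightarrow> spinor) \<Rightarrow> bool" where
  "S_minus M tau e m v vl u zeta \<longleftrightarrow>
    (\<forall>p\<in>M.
      majorana (zeta p)
    \<and> (\<forall>mu. (\<lambda>s::real. zeta (p + s *\<^sub>R axis mu 1)) differentiable (at 0))
    \<and> ((4/3 * v p - (\<Sum>a\<in>spat. \<Sum>b\<in>spat. eps a b * tauAB tau e p a b)) *\<^sub>R (gamma0 *v zeta p) = 0)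
    \<and> (\<forall>mu.
         ((3/2) *\<^sub>R (\<Sum>a\<in>spat. tauUp tau e p mu a *\<^sub>R gam2 a 0)
          + (\<Sum>a\<in>spat. (e p mu a * v p) *\<^sub>R gam a)
          + (\<Sum>a\<in>spat. (tau p mu * vframe tau e vl p a) *\<^sub>R gam a)
          + (Re (u p) * tau p mu) *\<^sub>R gamma0
          + (Im (u p) * tau p mu) *\<^sub>R mat 1) *v zeta p = 0)
    \<and> (\<forall>mu.
         pd mu zeta p + (\<Sum>a\<in>spat. \<Sum>b\<in>spat. (omega tau e m p mu a b / 4) *\<^sub>R gam2 a b) *v zeta p
         = ((tau0 tau e p mu / 4) *\<^sub>R mat 1
            + (vl p mu / 2) *\<^sub>R gamma0
            - (1/6) *\<^sub>R (\<Sum>a\<in>spat. \<Sum>b\<in>spat. (e p mu a * vframe tau e vl p b) *\<^sub>R (gam a ** gam b ** gamma0))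
            - (Re (u p) / 6) *\<^sub>R (\<Sum>a\<in>spat. e p mu a *\<^sub>R gam a)
            + (Im (u p) / 6) *\<^sub>R (\<Sum>a\<in>spat. e p mu a *\<^sub>R gam2 a 0)) *v zeta p))"

definition bgM :: "real \<Rightarrow> pt set" where
  "bgM l = {p. (p $ 1)^2 + (p $ 2)^2 < l^2}"

definition bg_lam :: "real \<Rightarrow> pt \<Rightarrow> real" where
  "bg_lam l p = ln (2 / (1 - ((p $ 1)^2 + (p $ 2)^2) / l^2))"

definition bg_kappa :: "real \<Rightarrow> pt \<Rightarrow> real" where
  "bg_kappa l p = - bg_lam l p"

definition bg_tau :: "real \<Rightarrow> pt \<Rightarrow> 3 \<Rightarrow> real" where
  "bg_tau l p mu = (if mu = 0 then exp (bg_kappa l p) else 0)"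

definition bg_e :: "real \<Rightarrow> pt \<Rightarrow> 3 \<Rightarrow> 3 \<Rightarrow> real" where
  "bg_e l p mu a = (if mu = a \<and> a \<noteq> 0 then exp (bg_lam l p) else 0)"

definition bg_m :: "real \<Rightarrow> (pt \<Rightarrow> real) \<Rightarrow> pt \<Rightarrow> 3 \<Rightarrow> real" where
  "bg_m l phi p mu = (if mu = 0 then phi p * exp (bg_kappa l p) else 0)"

definition bg_vcomp :: "real \<Rightarrow> pt \<Rightarrow> 3 \<Rightarrow> real" where
  "bg_vcomp l p A = (if A = 1 then 3/2 * (p $ 2 / l^2) else if A = 2 then 3/2 * (- (p $ 1) / l^2) else 0)"

definition bg_vl :: "real \<Rightarrow> pt \<Rightarrow> 3 \<Rightarrow> real" where
  "bg_vl l p mu = bg_tau l p mu * bg_vcomp l p 0 + (\<Sum>a\<in>spat. bg_e l p mu a * bg_vcomp l p a)"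

end

theory Submission
  imports Defs
begin

(*
  In this background the vielbein is diagonal, tau = (D/2) dt and e^a = (2/D) dx^a with
  D = 1 - |x|^2/l^2, and nothing depends on t. Hence tau_ab = 0, the only torsion component
  is tau_0a ~ x^a, and m enters the spin connection only through its spatial curl, which
  vanishes. The choice of v^a makes the algebraic operator of (S_-) vanish, and the spin
  connection term equals the right-hand side of the Killing equation as a matrix, so every
  constant Majorana spinor solves (S_-). Finally gamma_0 acts on real spinors as i acts on
  C = R^2, so exp(pi/8 gamma_0) is a rotation: it preserves the Majorana condition and is
  invertible.
*)

lemma numeral_3_eq_0: "(3::3) = 0"
  using of_nat_CHAR[where 'a = 3] by simp

lemma exhaust_3_from_0: "(i::3) = 0 \<or> i = 1 \<or> i = 2"
  using exhaust_3[of i] numeral_3_eq_0 by auto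

lemma forall_3_from_0: "(\<forall>i::3. P i) \<longleftrightarrow> P 0 \<and> P 1 \<and> P 2"
  by (metis exhaust_3_from_0)

lemma UNIV_3_from_0: "(UNIV::3 set) = {0, 1, 2}"
  using exhaust_3_from_0 by blast

lemma sum_3_from_0: "sum f (UNIV::3 set) = f 0 + f 1 + f 2"
  unfolding UNIV_3_from_0 by (simp add: ac_simps)

lemma numeral_2_eq_0: "(2::2) = 0"
  using of_nat_CHAR[where 'a = 2] by simp

lemma forall_2_from_0: "(\<forall>i::2. P i) \<longleftrightarrow> P 0 \<and> P 1"
  by (metis exhaust_2 numeral_2_eq_0)

lemma sum_2_from_0: "sum f (UNIV::2 set) = f 0 + f 1"
  by (simp add: sum_2 numeral_2_eq_0 add.commute)

lemma vec2_eq_iff: "(z::'a^2) = w \<longleftrightarrow> z$0 = w$0 \<and> z$1 = w$1"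
  by (simp add: vec_eq_iff forall_2_from_0)

lemma sum_spat: "sum f spat = f 1 + f 2"
  by (simp add: spat_def)

lemma spat_1: "(1::3) \<in> spat" and spat_2: "(2::3) \<in> spat"
  by (simp_all add: spat_def)

lemma matrix_vector_mult_scaleR_gen:
  fixes A :: "'a::real_algebra_1^'n^'m"
  shows "A *v (r *\<^sub>R x) = r *\<^sub>R (A *v x)"
  by (simp add: vec_eq_iff matrix_vector_mult_def scaleR_sum_right)

definition diag_mat :: "('n::finite \<Rightarrow> 'a::semiring_1) \<Rightarrow> 'a^'n^'n" where
  "diag_mat d = (\<chi> i j. if i = j then d i else 0)"

lemma diag_mat_mult:
  fixes d d' :: "'n::finite \<Rightarrow> 'a::semiring_1"
  shows "diag_mat d ** diag_mat d' = diag_mat (\<lambda>i. d i * d' i)"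
proof -
  have "(\<Sum>k\<in>UNIV. (if i = k then d i else 0) * (if k = j then d' k else 0)) =
        (if i = j then d i * d' i else 0)" for i j :: 'n
    by (simp add: if_distrib[of "\<lambda>x. x * _"] sum.delta cong: if_cong)
  then show ?thesis
    by (simp add: diag_mat_def matrix_matrix_mult_def vec_eq_iff)
qed

lemma matrix_inv_eqI:
  fixes A :: "'a::semiring_1^'n^'n"
  assumes "A ** B = mat 1" "B ** A = mat 1"
  shows "matrix_inv A = B"
proof -
  have "\<exists>A'. A ** A' = mat 1 \<and> A' ** A = mat 1" using assms by blast
  then have inv: "A ** matrix_inv A = mat 1 \<and> matrix_inv A ** A = mat 1"
    unfolding matrix_inv_def by (rule someI_ex)
  then have "matrix_inv A = matrix_inv A ** (A ** B)" using assms by simp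
  also have "\<dots> = B" using inv by (simp add: matrix_mul_assoc)
  finally show ?thesis .
qed

lemma matrix_inv_diag_mat:
  fixes d :: "'n::finite \<Rightarrow> 'a::field"
  assumes "\<And>i. d i \<noteq> 0"
  shows "matrix_inv (diag_mat d) = diag_mat (\<lambda>i. inverse (d i))"
proof -
  have "diag_mat (\<lambda>_. 1::'a) = mat 1" by (simp add: mat_def diag_mat_def)
  with assms show ?thesis by (intro matrix_inv_eqI) (simp_all add: diag_mat_mult)
qed

lemma mat2_eq_iff: "mat2 a b c d = mat2 a' b' c' d' \<longleftrightarrow> a = a' \<and> b = b' \<and> c = c' \<and> d = d'"
  by (simp add: mat2_def vec_eq_iff forall_2_from_0)

lemma mat2_add: "mat2 a b c d + mat2 a' b' c' d' = mat2 (a + a') (b + b') (c + c') (d + d')"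
  by (simp add: mat2_def vec_eq_iff forall_2_from_0)

lemma mat2_diff: "mat2 a b c d - mat2 a' b' c' d' = mat2 (a - a') (b - b') (c - c') (d - d')"
  by (simp add: mat2_def vec_eq_iff forall_2_from_0)

lemma mat2_uminus: "- mat2 a b c d = mat2 (- a) (- b) (- c) (- d)"
  by (simp add: mat2_def vec_eq_iff forall_2_from_0)

lemma mat2_scaleR: "r *\<^sub>R mat2 a b c d = mat2 (r *\<^sub>R a) (r *\<^sub>R b) (r *\<^sub>R c) (r *\<^sub>R d)"
  by (simp add: mat2_def vec_eq_iff forall_2_from_0)

lemma mat2_0: "(0::cmat) = mat2 0 0 0 0"
  by (simp add: mat2_def vec_eq_iff forall_2_from_0)

lemma mat2_1: "(mat 1::cmat) = mat2 1 0 0 1"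
  by (simp add: mat2_def vec_eq_iff forall_2_from_0 mat_def)

lemma mat2_mult:
  "mat2 a b c d ** mat2 a' b' c' d' =
     mat2 (a * a' + b * c') (a * b' + b * d') (c * a' + d * c') (c * b' + d * d')"
  by (simp add: mat2_def vec_eq_iff forall_2_from_0 matrix_matrix_mult_def sum_2_from_0)

lemma mat2_mulv: "mat2 a b c d *v z = (\<chi> i. if i = 0 then a * z$0 + b * z$1 else c * z$0 + d * z$1)"
  by (simp add: mat2_def vec_eq_iff forall_2_from_0 matrix_vector_mult_def sum_2_from_0)

lemmas mat2_simps = mat2_add mat2_diff mat2_uminus mat2_scaleR mat2_mult mat2_eq_iff

lemma sums_mat2:
  assumes "a sums a0" "b sums b0" "c sums c0" "d sums d0"
  shows "(\<lambda>n. mat2 (a n) (b n) (c n) (d n)) sums mat2 a0 b0 c0 d0"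
proof -
  have "(\<Sum>i<n. mat2 (a i) (b i) (c i) (d i)) =
        mat2 (\<Sum>i<n. a i) (\<Sum>i<n. b i) (\<Sum>i<n. c i) (\<Sum>i<n. d i)" for n
    by (induction n) (simp_all add: mat2_0 mat2_add)
  with assms show ?thesis
    unfolding sums_def mat2_def by (simp add: tendsto_vec_lambda)
qed

(* Since i C_3 gamma^0 is the identity, the Majorana condition says that the spinor is real. *)

lemma majorana_iff_real: "majorana z \<longleftrightarrow> z$0 \<in> \<real> \<and> z$1 \<in> \<real>"
  by (simp add: majorana_def C3_def gammaU0_def gamma0_def mat2_simps mat2_mulv vconj_def
      vec_eq_iff forall_2_from_0 Reals_cnj_iff)

definition cmat_of_complex :: "complex \<Rightarrow> cmat" where
  "cmat_of_complex z = mat2 (Re z) (- Im z) (Im z) (Re z)"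

lemma cmat_of_complex_1: "cmat_of_complex 1 = mat 1"
  by (simp add: cmat_of_complex_def mat2_1)

lemma cmat_of_complex_mult: "cmat_of_complex z ** cmat_of_complex w = cmat_of_complex (z * w)"
  by (simp add: cmat_of_complex_def mat2_simps algebra_simps)

lemma cmatpow_cmat_of_complex: "cmatpow (cmat_of_complex z) n = cmat_of_complex (z ^ n)"
  by (induction n) (simp_all add: cmat_of_complex_1 cmat_of_complex_mult)

lemma mexp_cmat_of_complex: "mexp (cmat_of_complex z) = cmat_of_complex (exp z)"
proof -
  have "(\<lambda>n. cmat_of_complex (z ^ n /\<^sub>R fact n)) sums cmat_of_complex (exp z)"
    unfolding cmat_of_complex_def using exp_converges[of z]
    by (intro sums_mat2 sums_of_real sums_minus sums_Re sums_Im)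
  moreover have "(1 / fact n) *\<^sub>R cmatpow (cmat_of_complex z) n = cmat_of_complex (z ^ n /\<^sub>R fact n)" for n
    unfolding cmatpow_cmat_of_complex unfolding cmat_of_complex_def mat2_scaleR
    by (simp add: scaleR_conv_of_real power2_eq_square)
  ultimately show ?thesis
    unfolding mexp_def by (simp add: sums_unique[symmetric])
qed

lemma mexp_scaleR_gamma0: "mexp (t *\<^sub>R gamma0) = cmat_of_complex (cis t)"
proof -
  have "t *\<^sub>R gamma0 = cmat_of_complex (\<i> * of_real t)"
    unfolding gamma0_def mat2_scaleR by (simp add: cmat_of_complex_def scaleR_conv_of_real)
  then show ?thesis
    by (simp add: mexp_cmat_of_complex cis_conv_exp)
qed

lemma cmat_of_complex_mulv_eq_0_iff: "cmat_of_complex z *v w = 0 \<longleftrightarrow> z = 0 \<or> w = 0"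
proof
  assume zw: "cmat_of_complex z *v w = 0"
  show "z = 0 \<or> w = 0"
  proof (cases "z = 0")
    case False
    then have "w = (cmat_of_complex (inverse z) ** cmat_of_complex z) *v w"
      by (simp add: cmat_of_complex_mult cmat_of_complex_1)
    also have "\<dots> = 0"
      by (simp add: matrix_vector_mul_assoc[symmetric] zw)
    finally show ?thesis by simp
  qed simp
next
  show "z = 0 \<or> w = 0 \<Longrightarrow> cmat_of_complex z *v w = 0"
    by (auto simp: cmat_of_complex_def mat2_mulv vec_eq_iff)
qed

lemma cmat_of_complex_mulv_axes_independent:
  fixes c1 c2 :: real
  assumes "c1 *\<^sub>R (cmat_of_complex z *v axis 0 1) + c2 *\<^sub>R (cmat_of_complex z *v axis 1 1) = 0"
    and "z \<noteq> 0"
  shows "c1 = 0 \<and> c2 = 0"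
proof -
  from assms(1) have "cmat_of_complex z *v (c1 *\<^sub>R axis 0 1 + c2 *\<^sub>R axis 1 1) = 0"
    by (simp add: matrix_vector_mult_scaleR_gen matrix_vector_right_distrib)
  with assms(2) have "c1 *\<^sub>R axis 0 1 + c2 *\<^sub>R axis 1 1 = (0::spinor)"
    by (simp only: cmat_of_complex_mulv_eq_0_iff simp_thms)
  then show ?thesis
    by (simp add: vec2_eq_iff axis_def)
qed

lemma majorana_cmat_of_complex_mulv: "majorana w \<Longrightarrow> majorana (cmat_of_complex z *v w)"
  by (auto simp: majorana_iff_real cmat_of_complex_def mat2_mulv)

lemma majorana_axis: "majorana (axis i 1)"
  by (simp add: majorana_iff_real axis_def)

lemma pd_eqI:
  assumes "((\<lambda>s. f (p + s *\<^sub>R axis mu 1)) has_real_derivative d) (at 0)"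
  shows "pd mu f p = d"
  using assms unfolding pd_def
  by (simp add: has_real_derivative_iff_has_vector_derivative vector_derivative_at)

lemma pd_const: "pd mu (\<lambda>q. c) p = 0"
  by (simp add: pd_def)

lemma has_real_derivative_exp_ln_two_div:
  assumes "(h has_real_derivative h') (at x)" "h x > 0"
  shows "((\<lambda>s. exp (ln (2 / h s))) has_real_derivative - 2 * h' / (h x)^2) (at x)"
proof -
  have "((\<lambda>s. exp (ln (2 / h s))) has_real_derivative
        exp (ln (2 / h x)) * (inverse (2 / h x) * (- (2 * h') / (h x)^2))) (at x)"
    using assms by (auto intro!: derivative_eq_intros simp: power2_eq_square)
  then show ?thesis
    using assms(2) by (simp add: field_simps power2_eq_square)
qed

lemma has_real_derivative_exp_minus_ln_two_div:
  assumes "(h has_real_derivative h') (at x)" "h x > 0"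
  shows "((\<lambda>s. exp (- ln (2 / h s))) has_real_derivative h' / 2) (at x)"
proof -
  have "((\<lambda>s. exp (- ln (2 / h s))) has_real_derivative
        exp (- ln (2 / h x)) * (- (inverse (2 / h x) * (- (2 * h') / (h x)^2)))) (at x)"
    using assms by (auto intro!: derivative_eq_intros simp: power2_eq_square)
  then show ?thesis
    using assms(2) by (simp add: exp_minus field_simps power2_eq_square)
qed

definition bg_D :: "real \<Rightarrow> pt \<Rightarrow> real" where
  "bg_D l p = 1 - ((p $ 1)^2 + (p $ 2)^2) / l^2"

lemma bg_D_pos: "l > 0 \<Longrightarrow> p \<in> bgM l \<Longrightarrow> bg_D l p > 0"
  by (simp add: bg_D_def bgM_def)

lemma bg_lam_eq: "bg_lam l p = ln (2 / bg_D l p)"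
  by (simp add: bg_lam_def bg_D_def)

lemma has_real_derivative_bg_D_line:
  assumes "l \<noteq> 0"
  shows "((\<lambda>s. bg_D l (p + s *\<^sub>R axis mu 1)) has_real_derivative
           (if mu = 0 then 0 else - 2 * p $ mu / l^2)) (at 0)"
proof -
  have line: "(p + s *\<^sub>R axis mu 1) $ i = p $ i + (if i = mu then s else 0)" for s i
    by (simp add: axis_def)
  consider "mu = 0" | "mu = 1" | "mu = 2" using exhaust_3_from_0 by blast
  then show ?thesis
    unfolding bg_D_def line
    by cases (use assms in \<open>auto intro!: derivative_eq_intros simp: power2_eq_square\<close>)
qed

lemma anti1_bg_m_spatial: "a \<noteq> 0 \<Longrightarrow> b \<noteq> 0 \<Longrightarrow> anti1 (bg_m l phi) p a b = 0"
  by (simp add: anti1_def bg_m_def pd_const)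

lemma gam_simps: "gam 0 = gamma0" "gam 1 = gamma1" "gam 2 = gamma2"
  by (simp_all add: gam_def)

context
  fixes l :: real and p :: pt
  assumes l_pos: "l > 0" and p_in: "p \<in> bgM l"
begin

lemma bg_tau_eq: "bg_tau l p mu = (if mu = 0 then bg_D l p / 2 else 0)"
  using bg_D_pos[OF l_pos p_in] by (simp add: bg_tau_def bg_kappa_def bg_lam_eq exp_minus)

lemma bg_e_eq: "bg_e l p mu a = (if mu = a \<and> a \<noteq> 0 then 2 / bg_D l p else 0)"
  using bg_D_pos[OF l_pos p_in] by (simp add: bg_e_def bg_lam_eq)

lemma pd_bg_tau:
  "pd mu (\<lambda>q. bg_tau l q nu) p = (if nu = 0 \<and> mu \<noteq> 0 then - p $ mu / l^2 else 0)"
proof (cases "nu = 0")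
  case True
  have "((\<lambda>s. exp (- ln (2 / bg_D l (p + s *\<^sub>R axis mu 1)))) has_real_derivative
          (if mu = 0 then 0 else - 2 * p $ mu / l^2) / 2) (at 0)"
    using l_pos bg_D_pos[OF l_pos p_in]
    by (intro has_real_derivative_exp_minus_ln_two_div has_real_derivative_bg_D_line) simp_all
  with True show ?thesis
    by (intro pd_eqI) (cases "mu = 0"; simp add: bg_tau_def bg_kappa_def bg_lam_eq)
qed (simp add: bg_tau_def pd_const)

lemma pd_bg_e:
  "pd mu (\<lambda>q. bg_e l q nu a) p =
     (if nu = a \<and> a \<noteq> 0 \<and> mu \<noteq> 0 then 4 * p $ mu / (l^2 * (bg_D l p)^2) else 0)"
proof (cases "nu = a \<and> a \<noteq> 0")
  case True
  have "((\<lambda>s. exp (ln (2 / bg_D l (p + s *\<^sub>R axis mu 1)))) has_real_derivative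
          - 2 * (if mu = 0 then 0 else - 2 * p $ mu / l^2) / (bg_D l (p + 0 *\<^sub>R axis mu 1))^2) (at 0)"
    using l_pos bg_D_pos[OF l_pos p_in]
    by (intro has_real_derivative_exp_ln_two_div has_real_derivative_bg_D_line) simp_all
  with True show ?thesis
    by (intro pd_eqI) (cases "mu = 0"; simp add: bg_e_def bg_lam_eq)
qed (auto simp add: bg_e_def pd_const)

lemma vielbein_bg:
  "vielbein (bg_tau l) (bg_e l) p = diag_mat (\<lambda>i. if i = 0 then bg_D l p / 2 else 2 / bg_D l p)"
  by (simp add: vielbein_def diag_mat_def vec_eq_iff forall_3_from_0 bg_tau_eq bg_e_eq)

lemma matrix_inv_vielbein_bg:
  "matrix_inv (vielbein (bg_tau l) (bg_e l) p) =
     diag_mat (\<lambda>i. if i = 0 then 2 / bg_D l p else bg_D l p / 2)"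
proof -
  have "matrix_inv (vielbein (bg_tau l) (bg_e l) p) =
        diag_mat (\<lambda>i. inverse (if i = 0 then bg_D l p / 2 else 2 / bg_D l p))"
    unfolding vielbein_bg using bg_D_pos[OF l_pos p_in] by (intro matrix_inv_diag_mat) simp
  also have "\<dots> = diag_mat (\<lambda>i. if i = 0 then 2 / bg_D l p else bg_D l p / 2)"
    by (intro arg_cong[where f = diag_mat]) auto
  finally show ?thesis .
qed

lemma tauU_bg: "tauU (bg_tau l) (bg_e l) p mu = (if mu = 0 then 2 / bg_D l p else 0)"
  by (simp add: tauU_def matrix_inv_vielbein_bg diag_mat_def)

lemma eU_bg:
  "eU (bg_tau l) (bg_e l) p mu a =
     (if mu = a then (if a = 0 then 2 / bg_D l p else bg_D l p / 2) else 0)"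
  by (simp add: eU_def matrix_inv_vielbein_bg diag_mat_def)

lemma tauAB_bg: "a \<in> spat \<Longrightarrow> b \<in> spat \<Longrightarrow> tauAB (bg_tau l) (bg_e l) p a b = 0"
  by (auto simp: spat_def tauAB_def tauF_def sum_3_from_0 eU_bg pd_bg_tau)

lemma tau0_bg: "tau0 (bg_tau l) (bg_e l) p mu = (if mu = 0 then 0 else 2 * p $ mu / (l^2 * bg_D l p))"
  by (auto simp: tau0_def tauF_def sum_3_from_0 tauU_bg pd_bg_tau)

lemma tauUp_bg:
  "a \<in> spat \<Longrightarrow>
     tauUp (bg_tau l) (bg_e l) p mu a = (if mu = 0 then p $ a * bg_D l p / (2 * l^2) else 0)"
  using exhaust_3_from_0[of mu]
  by (auto simp: spat_def tauUp_def tauF_def sum_3_from_0 eU_bg pd_bg_tau)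

lemma bg_vl_eq: "bg_vl l p mu = (if mu = 0 then 0 else 2 / bg_D l p * bg_vcomp l p mu)"
  using exhaust_3_from_0[of mu] by (auto simp: bg_vl_def sum_spat bg_e_eq bg_tau_eq bg_vcomp_def)

lemma vframe_bg: "b \<in> spat \<Longrightarrow> vframe (bg_tau l) (bg_e l) (bg_vl l) p b = bg_vcomp l p b"
  using bg_D_pos[OF l_pos p_in] by (auto simp: spat_def vframe_def sum_3_from_0 eU_bg bg_vl_eq)

lemma anti1_bg_e:
  "anti1 (\<lambda>q n. bg_e l q n c) p mu nu =
     ((if nu = c \<and> c \<noteq> 0 \<and> mu \<noteq> 0 then 2 * p $ mu else 0)
    - (if mu = c \<and> c \<noteq> 0 \<and> nu \<noteq> 0 then 2 * p $ nu else 0)) / (l^2 * (bg_D l p)^2)"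
  by (simp add: anti1_def pd_bg_e diff_divide_distrib)

lemma omega_bg:
  assumes "a \<in> spat" "b \<in> spat"
  shows "omega (bg_tau l) (bg_e l) (bg_m l phi) p mu a b =
    (if a = mu then 2 * p $ b / (l^2 * bg_D l p) else 0)
  - (if b = mu then 2 * p $ a / (l^2 * bg_D l p) else 0)"
proof -
  have "a = 1 \<or> a = 2" "b = 1 \<or> b = 2" using assms by (auto simp: spat_def)
  then show ?thesis
    using exhaust_3_from_0[of mu] bg_D_pos[OF l_pos p_in] l_pos
    apply (simp add: omega_def sum_3_from_0 sum_spat eU_bg anti1_bg_e bg_tau_eq bg_e_eq
        anti1_bg_m_spatial)
    apply (elim disjE; simp add: field_simps power2_eq_square)
    done
qed

lemma bg_tauAB_trace: "(\<Sum>a\<in>spat. \<Sum>b\<in>spat. eps a b * tauAB (bg_tau l) (bg_e l) p a b) = 0"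
  by (simp add: tauAB_bg)

lemma bg_algebraic_operator_eq_0:
  "(3/2) *\<^sub>R (\<Sum>a\<in>spat. tauUp (bg_tau l) (bg_e l) p mu a *\<^sub>R gam2 a 0)
   + (\<Sum>a\<in>spat. (bg_tau l p mu * vframe (bg_tau l) (bg_e l) (bg_vl l) p a) *\<^sub>R gam a) = 0"
  using exhaust_3_from_0[of mu] bg_D_pos[OF l_pos p_in] l_pos
  apply (simp add: sum_spat tauUp_bg vframe_bg spat_1 spat_2 bg_tau_eq bg_vcomp_def gam_simps gam2_def)
  apply (simp add: gamma0_def gamma1_def gamma2_def mat2_0 mat2_simps)
  apply (elim disjE; simp add: complex_eq_iff field_simps)
  done

lemma bg_spin_connection_eq:
  "(\<Sum>a\<in>spat. \<Sum>b\<in>spat. (omega (bg_tau l) (bg_e l) (bg_m l phi) p mu a b / 4) *\<^sub>R gam2 a b)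
   = (tau0 (bg_tau l) (bg_e l) p mu / 4) *\<^sub>R mat 1 + (bg_vl l p mu / 2) *\<^sub>R gamma0
     - (1/6) *\<^sub>R (\<Sum>a\<in>spat. \<Sum>b\<in>spat.
          (bg_e l p mu a * vframe (bg_tau l) (bg_e l) (bg_vl l) p b) *\<^sub>R (gam a ** gam b ** gamma0))"
  using exhaust_3_from_0[of mu] bg_D_pos[OF l_pos p_in] l_pos
  apply (simp add: sum_spat omega_bg spat_1 spat_2 vframe_bg bg_e_eq bg_vcomp_def tau0_bg bg_vl_eq
      gam_simps gam2_def)
  apply (simp add: gamma0_def gamma1_def gamma2_def mat2_0 mat2_1 mat2_simps)
  apply (elim disjE; simp add: complex_eq_iff field_simps)
  done

end

lemma S_minus_bg_constant:
  assumes "l > 0" "majorana z"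
  shows "S_minus (bgM l) (bg_tau l) (bg_e l) (bg_m l phi) (\<lambda>p. 0) (bg_vl l) (\<lambda>p. 0) (\<lambda>p. z)"
  unfolding S_minus_def
  using assms bg_tauAB_trace[OF assms(1)] bg_algebraic_operator_eq_0[OF assms(1)]
    bg_spin_connection_eq[OF assms(1)]
  by (simp add: pd_const)

theorem mainTheorem5:
  fixes l :: real and phi :: "pt \<Rightarrow> real"
  assumes "l > 0"
    and "smooth_on (bgM l) phi"
  shows "(\<forall>z0. majorana z0 \<and> z0 \<noteq> 0 \<longrightarrow>
            S_minus (bgM l) (bg_tau l) (bg_e l) (bg_m l phi) (\<lambda>p. 0) (bg_vl l) (\<lambda>p. 0)
                    (\<lambda>p. mexp ((pi / 8) *\<^sub>R gamma0) *v z0)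
          \<and> (\<forall>p\<in>bgM l. mexp ((pi / 8) *\<^sub>R gamma0) *v z0 \<noteq> 0))
       \<and> (\<exists>za zb. majorana za \<and> majorana zb \<and> za \<noteq> 0 \<and> zb \<noteq> 0 \<and>
            (\<forall>c1 c2 :: real.
               (\<forall>p\<in>bgM l. c1 *\<^sub>R (mexp ((pi / 8) *\<^sub>R gamma0) *v za)
                          + c2 *\<^sub>R (mexp ((pi / 8) *\<^sub>R gamma0) *v zb) = 0)
               \<longrightarrow> c1 = 0 \<and> c2 = 0))"
  unfolding mexp_scaleR_gamma0
proof (intro conjI allI impI)
  fix z0 assume "majorana z0 \<and> z0 \<noteq> 0"
  then show "S_minus (bgM l) (bg_tau l) (bg_e l) (bg_m l phi) (\<lambda>p. 0) (bg_vl l) (\<lambda>p. 0)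
               (\<lambda>p. cmat_of_complex (cis (pi / 8)) *v z0)"
    and "\<forall>p\<in>bgM l. cmat_of_complex (cis (pi / 8)) *v z0 \<noteq> 0"
    by (simp_all add: S_minus_bg_constant assms(1) majorana_cmat_of_complex_mulv
        cmat_of_complex_mulv_eq_0_iff)
next
  have "(0::pt) \<in> bgM l"
    using assms(1) by (simp add: bgM_def)
  then show "\<exists>za zb. majorana za \<and> majorana zb \<and> za \<noteq> 0 \<and> zb \<noteq> 0 \<and>
      (\<forall>c1 c2 :: real. (\<forall>p\<in>bgM l. c1 *\<^sub>R (cmat_of_complex (cis (pi / 8)) *v za)
                                   + c2 *\<^sub>R (cmat_of_complex (cis (pi / 8)) *v zb) = 0)
         \<longrightarrow> c1 = 0 \<and> c2 = 0)"
    by (intro exI[of _ "axis 0 1"] exI[of _ "axis 1 1"])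
      (auto simp: majorana_axis dest: cmat_of_complex_mulv_axes_independent)
qed

end
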